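(* With $\theta$ and $\widehat\Theta$ as in the context, $(X_\theta,S)$ is a topological factor of $(X_{\widehat\Theta},S)$, i.e. there is a continuous surjection $\pi:X_{\widehat\Theta}\to X_\theta$ with $\pi\circ S=S\circ\pi$.
   Context: For a primitive substitution $\zeta$ over an alphabet $\mathbb{B}$, $X_\zeta\subset\mathbb{B}^{\mathbb{Z}}$ is the set of sequences all of whose finite blocks occur in some iterate $\zeta^k(b)$, and $S$ is the left shift. Let $\theta:\mathbb{A}\to\mathbb{A}^\lambda$ ($\lambda\ge2$) be primitive, injective on letters, with infinite subshift, $c=c(\theta)=\min_{k\ge1,0\le j<\lambda^k}|\{\theta^k(a)_j:a\in\mathbb{A}\}|$. Let $\mathcal{X}$ be the set of $M\subset\mathbb{A}$ with $|M|=c$ and $M=\{\theta^k(a)_j:a\in\mathbb{A}\}$ for some $k\ge1$, $j<\lambda^k$; $\widetilde\theta(M)_j:=\{\theta(a)_j:a\in M\}\in\mathcal{X}$, and $a\mapsto\theta(a)_j$ is a bijection $M\to\widetilde\theta(M)_j$. Assume (after passing to a power) $a_0\in M_0\in\mathcal{X}$ with $\theta(a_0)_0=a_0$, $\widetilde\theta(M_0)_0=M_0$. Fix a total order on $M_0$ with minimum $a_0$, and $k_0\ge1$, $j_0<\lambda^{k_0}$ with $\theta^{k_0}(a)_{j_0}=a$ ($a\in M_0$) and $\widetilde\theta^{k_0}(M)_{j_0}=M_0$ ($M\in\mathcal{X}$). Order each $M$ by $a<b$ iff $\theta^{k_0}(a)_{j_0}<\theta^{k_0}(b)_{j_0}$;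 $e_M(i)$ is the $(i+1)$-th smallest element of $M$. $\widetilde\Theta(i,M)_j=(i',\widetilde\theta(M)_j)$ where $\theta(e_M(i))_j=e_{\widetilde\theta(M)_j}(i')$; $\sigma_{M,j}\in\mathcal{S}_c$ is defined by $\sigma_{M,j}(m)=n$ iff $\widetilde\Theta(n,M)_j=(m,\widetilde\theta(M)_j)$; $G=\langle\sigma_{M,j}\rangle\le\mathcal{S}_c$; $\widehat\Theta:G\times\mathcal{X}\to(G\times\mathcal{X})^\lambda$, $\widehat\Theta(\sigma,M)_j=(\sigma\circ\sigma_{M,j},\widetilde\theta(M)_j)$ (a primitive substitution). *)

theory Defs
  imports "HOL-Analysis.Analysis"
begin

text \<open>A substitution of constant length L over letters of type 'b is a map
  zeta :: 'b => nat => 'b, where zeta b j (for j < L) is the j-th letter of zeta(b).\<close>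

fun subst_pow :: "nat \<Rightarrow> ('b \<Rightarrow> nat \<Rightarrow> 'b) \<Rightarrow> nat \<Rightarrow> 'b \<Rightarrow> nat \<Rightarrow> 'b" where
  "subst_pow L z 0 b = (\<lambda>j. b)"
| "subst_pow L z (Suc k) b = (\<lambda>j. z (subst_pow L z k b (j div L)) (j mod L))"

definition subst_lang :: "'b set \<Rightarrow> nat \<Rightarrow> ('b \<Rightarrow> nat \<Rightarrow> 'b) \<Rightarrow> 'b list set" where
  "subst_lang B L z = {w. \<exists>b\<in>B. \<exists>k i. i + length w \<le> L ^ k \<and>
       (\<forall>t<length w. w ! t = subst_pow L z k b (i + t))}"

definition subshift :: "'b set \<Rightarrow> nat \<Rightarrow> ('b \<Rightarrow> nat \<Rightarrow> 'b) \<Rightarrow> (int \<Rightarrow> 'b) set" where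
  "subshift B L z = {x. \<forall>m (n::nat). map (\<lambda>t. x (m + int t)) [0..<n] \<in> subst_lang B L z}"

definition shift :: "(int \<Rightarrow> 'b) \<Rightarrow> (int \<Rightarrow> 'b)" where
  "shift x = (\<lambda>n. x (n + 1))"

definition shift_topology :: "(int \<Rightarrow> 'b) topology" where
  "shift_topology = product_topology (\<lambda>_. discrete_topology UNIV) UNIV"

definition primitive_subst :: "'b set \<Rightarrow> nat \<Rightarrow> ('b \<Rightarrow> nat \<Rightarrow> 'b) \<Rightarrow> bool" where
  "primitive_subst B L z \<longleftrightarrow> (\<exists>k\<ge>1. \<forall>a\<in>B. \<forall>b\<in>B. \<exists>j<L ^ k. subst_pow L z k a j = b)"

definition column :: "nat \<Rightarrow> ('a \<Rightarrow> nat \<Rightarrow> 'a) \<Rightarrow> nat \<Rightarrow> nat \<Rightarrow> 'a set" where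
  "column L th k j = {subst_pow L th k a j | a. True}"

definition col_min :: "nat \<Rightarrow> ('a \<Rightarrow> nat \<Rightarrow> 'a) \<Rightarrow> nat" where
  "col_min L th = (LEAST n. \<exists>k\<ge>1. \<exists>j<L ^ k. card (column L th k j) = n)"

definition minsets :: "nat \<Rightarrow> ('a \<Rightarrow> nat \<Rightarrow> 'a) \<Rightarrow> 'a set set" where
  "minsets L th = {M. card M = col_min L th \<and> (\<exists>k\<ge>1. \<exists>j<L ^ k. M = column L th k j)}"

definition tsubst :: "nat \<Rightarrow> ('a \<Rightarrow> nat \<Rightarrow> 'a) \<Rightarrow> nat \<Rightarrow> 'a set \<Rightarrow> nat \<Rightarrow> 'a set" where
  "tsubst L th k M j = (\<lambda>a. subst_pow L th k a j) ` M"

text \<open>The order on M0 is given by an enumeration e0 : {0..<c} -> M0 in increasing order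
  (e0 i = the (i+1)-th smallest element of M0). For M in X the order is
  a < b iff theta^k0(a)_j0 < theta^k0(b)_j0, so the (i+1)-th smallest element of M
  is the element of M sent to e0 i by a |-> theta^k0(a)_j0.\<close>
definition eM :: "nat \<Rightarrow> ('a \<Rightarrow> nat \<Rightarrow> 'a) \<Rightarrow> nat \<Rightarrow> nat \<Rightarrow> (nat \<Rightarrow> 'a) \<Rightarrow> 'a set \<Rightarrow> nat \<Rightarrow> 'a" where
  "eM L th k0 j0 e0 M i = (THE a. a \<in> M \<and> subst_pow L th k0 a j0 = e0 i)"

definition sigmaM :: "nat \<Rightarrow> ('a \<Rightarrow> nat \<Rightarrow> 'a) \<Rightarrow> nat \<Rightarrow> nat \<Rightarrow> (nat \<Rightarrow> 'a) \<Rightarrow> 'a set \<Rightarrow> nat \<Rightarrow> nat \<Rightarrow> nat" where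
  "sigmaM L th k0 j0 e0 M j m =
     (if m < col_min L th then
        (THE n. n < col_min L th \<and>
           th (eM L th k0 j0 e0 M n) j = eM L th k0 j0 e0 (tsubst L th 1 M j) m)
      else m)"

inductive_set gen_group :: "(nat \<Rightarrow> nat) set \<Rightarrow> (nat \<Rightarrow> nat) set" for S where
  gen_id: "id \<in> gen_group S"
| gen_base: "s \<in> S \<Longrightarrow> s \<in> gen_group S"
| gen_comp: "f \<in> gen_group S \<Longrightarrow> g \<in> gen_group S \<Longrightarrow> f \<circ> g \<in> gen_group S"
| gen_inv: "f \<in> gen_group S \<Longrightarrow> inv f \<in> gen_group S"

definition Ggroup :: "nat \<Rightarrow> ('a \<Rightarrow> nat \<Rightarrow> 'a) \<Rightarrow> nat \<Rightarrow> nat \<Rightarrow> (nat \<Rightarrow> 'a) \<Rightarrow> (nat \<Rightarrow> nat) set" where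
  "Ggroup L th k0 j0 e0 =
     gen_group {sigmaM L th k0 j0 e0 M j | M j. M \<in> minsets L th \<and> j < L}"

definition hatTheta :: "nat \<Rightarrow> ('a \<Rightarrow> nat \<Rightarrow> 'a) \<Rightarrow> nat \<Rightarrow> nat \<Rightarrow> (nat \<Rightarrow> 'a)
    \<Rightarrow> ((nat \<Rightarrow> nat) \<times> 'a set) \<Rightarrow> nat \<Rightarrow> ((nat \<Rightarrow> nat) \<times> 'a set)" where
  "hatTheta L th k0 j0 e0 p j =
     (fst p \<circ> sigmaM L th k0 j0 e0 (snd p) j, tsubst L th 1 (snd p) j)"

definition hatAlph :: "nat \<Rightarrow> ('a \<Rightarrow> nat \<Rightarrow> 'a) \<Rightarrow> nat \<Rightarrow> nat \<Rightarrow> (nat \<Rightarrow> 'a) \<Rightarrow> ((nat \<Rightarrow> nat) \<times> 'a set) set" where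
  "hatAlph L th k0 j0 e0 = Ggroup L th k0 j0 e0 \<times> minsets L th"

end

theory Submission
  imports Defs
begin

text \<open>The factor map is letter-to-letter: (\<sigma>, M) is sent to e_M(inv \<sigma> 0). Since \<sigma>_{M,j} is
  defined so that \<theta> carries e_M(\<sigma>_{M,j} m) to e_{\<theta>~(M)_j}(m), this letter map intertwines
  hatTheta with \<theta>; hence it maps the language of hatTheta into that of \<theta> and induces a
  continuous map of subshifts commuting with the shift. For surjectivity, primitivity places every
  word of \<theta> inside an iterate of \<theta> on the image of (id, M0), so every word lifts to a word of
  hatTheta; as the alphabet G \<times> X is finite, a Koenig-type compactness argument assembles lifts
  of the central windows of a point of X_\<theta> into a single point above it.\<close>

lemma subst_pow_add:
  assumes "0 < L" and "i < L ^ k"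
  shows "subst_pow L z (k + p) a (j * L ^ k + i) = subst_pow L z k (subst_pow L z p a j) i"
  using assms(2)
proof (induction k arbitrary: i)
  case 0
  then show ?case by simp
next
  case (Suc k)
  have split: "j * L ^ Suc k + i = i + (j * L ^ k) * L"
    by (simp add: algebra_simps)
  have "(j * L ^ Suc k + i) div L = j * L ^ k + i div L"
    and "(j * L ^ Suc k + i) mod L = i mod L"
    unfolding split using assms(1) by simp_all
  moreover have "i div L < L ^ k"
    using Suc.prems assms(1) by (simp add: less_mult_imp_div_less mult.commute)
  ultimately show ?case
    using Suc.IH by simp
qed

lemma tsubst_one: "j < L \<Longrightarrow> tsubst L th 1 M j = (\<lambda>a. th a j) ` M"
  by (simp add: tsubst_def)

lemma column_Suc:
  assumes "j < L"
  shows "column L th (Suc k) (j' * L + j) = (\<lambda>a. th a j) ` column L th k j'"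
  using assms unfolding column_def by auto

lemma subst_lang_subword:
  assumes "w \<in> subst_lang B L z" and "s + length v \<le> length w"
    and "\<And>t. t < length v \<Longrightarrow> v ! t = w ! (s + t)"
  shows "v \<in> subst_lang B L z"
proof -
  obtain b k i where "b \<in> B" "i + length w \<le> L ^ k"
    and w: "\<forall>t<length w. w ! t = subst_pow L z k b (i + t)"
    using assms(1) unfolding subst_lang_def by auto
  show ?thesis
    unfolding subst_lang_def
  proof (intro CollectI bexI exI conjI allI impI)
    show "i + s + length v \<le> L ^ k"
      using \<open>i + length w \<le> L ^ k\<close> assms(2) by simp
    fix t assume "t < length v"
    then show "v ! t = subst_pow L z k b (i + s + t)"
      using w assms(2,3) by (simp add: add.assoc)
  qed fact
qed

definition central_window :: "(int \<Rightarrow> 'b) \<Rightarrow> nat \<Rightarrow> 'b list" where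
  "central_window x N = map (\<lambda>t. x (- int N + int t)) [0..<2 * N + 1]"

lemma length_central_window [simp]: "length (central_window x N) = 2 * N + 1"
  by (simp add: central_window_def)

lemma central_window_nth:
  assumes "\<bar>i\<bar> \<le> int N"
  shows "central_window x N ! nat (i + int N) = x i"
proof -
  have "0 \<le> i + int N" and "nat (i + int N) < 2 * N + 1"
    using assms by simp_all
  then show ?thesis
    by (simp add: central_window_def del: upt_Suc)
qed

lemma central_window_eq_iff:
  "central_window x N = central_window y N \<longleftrightarrow> (\<forall>i. \<bar>i\<bar> \<le> int N \<longrightarrow> x i = y i)"
proof
  assume "central_window x N = central_window y N"
  then show "\<forall>i. \<bar>i\<bar> \<le> int N \<longrightarrow> x i = y i"
    by (metis central_window_nth)
next
  assume "\<forall>i. \<bar>i\<bar> \<le> int N \<longrightarrow> x i = y i"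
  then show "central_window x N = central_window y N"
    unfolding central_window_def by (intro map_cong) auto
qed

lemma map_central_window: "map f (central_window x N) = central_window (\<lambda>i. f (x i)) N"
  by (simp add: central_window_def)

lemma central_window_of_list:
  assumes "length v = 2 * N + 1"
  shows "central_window (\<lambda>i. v ! nat (i + int N)) N = v"
  using assms by (intro nth_equalityI) (simp_all add: central_window_def del: upt_Suc)

lemma central_window_subword:
  assumes "central_window x M \<in> subst_lang B L z" and "N \<le> M"
  shows "central_window x N \<in> subst_lang B L z"
  using assms(1)
proof (rule subst_lang_subword[where s = "M - N"])
  show "M - N + length (central_window x N) \<le> length (central_window x M)"
    using assms(2) by (simp add: central_window_def)
  fix t assume "t < length (central_window x N)"
  then have "t < 2 * N + 1" and "M - N + t < 2 * M + 1"
    using assms(2) by (simp_all add: central_window_def)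
  then show "central_window x N ! t = central_window x M ! (M - N + t)"
    using assms(2) by (simp add: central_window_def del: upt_Suc)
qed

lemma subshift_iff_central_windows:
  "x \<in> subshift B L z \<longleftrightarrow> (\<forall>N. central_window x N \<in> subst_lang B L z)"
proof
  assume "x \<in> subshift B L z"
  then show "\<forall>N. central_window x N \<in> subst_lang B L z"
    unfolding subshift_def central_window_def by blast
next
  assume windows: "\<forall>N. central_window x N \<in> subst_lang B L z"
  show "x \<in> subshift B L z"
    unfolding subshift_def
  proof (intro CollectI allI)
    fix m :: int and n :: nat
    define N where "N = nat \<bar>m\<bar> + n"
    show "map (\<lambda>t. x (m + int t)) [0..<n] \<in> subst_lang B L z"
    proof (rule subst_lang_subword[OF windows[rule_format, of N], where s = "nat (m + int N)"])
      show "nat (m + int N) + length (map (\<lambda>t. x (m + int t)) [0..<n]) \<le> length (central_window x N)"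
        by (simp add: N_def central_window_def)
      fix t assume "t < length (map (\<lambda>t. x (m + int t)) [0..<n])"
      moreover have "0 \<le> m + int N"
        by (simp add: N_def)
      moreover have "nat (m + int N) + t < 2 * N + 1"
        using calculation by (simp add: N_def)
      ultimately show "map (\<lambda>t. x (m + int t)) [0..<n] ! t = central_window x N ! (nat (m + int N) + t)"
        by (simp add: N_def central_window_def del: upt_Suc)
    qed
  qed
qed

locale finite_window_property =
  fixes A :: "'b set" and P :: "nat \<Rightarrow> (int \<Rightarrow> 'b) \<Rightarrow> bool"
  assumes finite_alphabet: "finite A"
    and window_local: "\<And>N g h. P N g \<Longrightarrow> (\<And>i. \<bar>i\<bar> \<le> int N \<Longrightarrow> h i = g i) \<Longrightarrow> P N h"
    and antimono: "\<And>M N g. P M g \<Longrightarrow> N \<le> M \<Longrightarrow> P N g"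
    and satisfiable: "\<And>N. \<exists>g. P N g"
    and values_in_alphabet: "\<And>N g i. P N g \<Longrightarrow> \<bar>i\<bar> \<le> int N \<Longrightarrow> g i \<in> A"
begin

definition extendable :: "nat \<Rightarrow> (int \<Rightarrow> 'b) \<Rightarrow> bool" where
  "extendable N f \<longleftrightarrow> (\<forall>M. \<exists>g. P M g \<and> (\<forall>i. \<bar>i\<bar> < int N \<longrightarrow> g i = f i))"

text \<open>If every extension of f by a pair of letters at -N and N failed from some window size on,
  the largest of these finitely many sizes would contradict the extendability of f.\<close>
lemma extendable_Suc:
  assumes "extendable N f"
  shows "\<exists>f'. extendable (Suc N) f' \<and> (\<forall>i. \<bar>i\<bar> < int N \<longrightarrow> f' i = f i)"
proof (rule ccontr)
  assume no_extension: "\<not> ?thesis"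
  define fq where "fq q = f(- int N := fst q, int N := snd q)" for q :: "'b \<times> 'b"
  have "\<forall>i. \<bar>i\<bar> < int N \<longrightarrow> fq q i = f i" for q
    by (simp add: fq_def)
  then have "\<not> extendable (Suc N) (fq q)" for q
    using no_extension by blast
  then obtain Mq where Mq: "\<And>q g. P (Mq q) g \<Longrightarrow> \<exists>i. \<bar>i\<bar> < int (Suc N) \<and> g i \<noteq> fq q i"
    unfolding extendable_def by metis
  define M where "M = max N (Max (Mq ` (A \<times> A)))"
  obtain g where g: "P M g" and g_f: "\<And>i. \<bar>i\<bar> < int N \<Longrightarrow> g i = f i"
    using assms unfolding extendable_def by blast
  define q where "q = (g (- int N), g (int N))"
  have "q \<in> A \<times> A"
    using values_in_alphabet[OF g] by (simp add: q_def M_def)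
  then have "Mq q \<le> M"
    using finite_alphabet unfolding M_def by (simp add: le_max_iff_disj)
  then have "P (Mq q) g"
    using antimono[OF g] by blast
  moreover have "g i = fq q i" if "\<bar>i\<bar> < int (Suc N)" for i
    using that g_f[of i] by (auto simp: fq_def q_def)
  ultimately show False
    using Mq by blast
qed

lemma ex_sequence_satisfying_all: "\<exists>x. \<forall>N. P N x"
proof -
  have "extendable 0 f" for f
    using satisfiable by (simp add: extendable_def)
  then obtain F where F: "\<And>N. extendable N (F N)"
    and F_Suc: "\<And>N i. \<bar>i\<bar> < int N \<Longrightarrow> F (Suc N) i = F N i"
    using dependent_nat_choice[of extendable "\<lambda>N f f'. \<forall>i. \<bar>i\<bar> < int N \<longrightarrow> f' i = f i"]
      extendable_Suc by metis
  have F_stable: "F N i = F N0 i" if "N0 \<le> N" "\<bar>i\<bar> < int N0" for N N0 i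
    using that(1)
  proof (induction rule: dec_induct)
    case (step n)
    then show ?case
      using F_Suc[of i n] that(2) by simp
  qed simp
  define x where "x i = F (nat \<bar>i\<bar> + 1) i" for i
  have "P N x" for N
  proof -
    obtain g where g: "P (Suc N) g" and g_F: "\<And>i. \<bar>i\<bar> < int (Suc N) \<Longrightarrow> g i = F (Suc N) i"
      using F[of "Suc N"] unfolding extendable_def by blast
    show "P N x"
    proof (rule window_local[OF antimono[OF g]])
      fix i :: int assume "\<bar>i\<bar> \<le> int N"
      then show "x i = g i"
        using g_F[of i] F_stable[of "nat \<bar>i\<bar> + 1" "Suc N" i] by (simp add: x_def)
    qed simp
  qed
  then show ?thesis
    by (intro exI allI)
qed

end

lemma continuous_map_letterwise:
  "continuous_map shift_topology shift_topology (\<lambda>x n. f (x n))"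
  unfolding shift_topology_def continuous_map_componentwise_UNIV
proof
  fix k :: int
  have "continuous_map (product_topology (\<lambda>_. discrete_topology UNIV) UNIV) (discrete_topology UNIV) (\<lambda>x. x k)"
    by (rule continuous_map_product_projection) simp
  then have "continuous_map (product_topology (\<lambda>_. discrete_topology UNIV) UNIV) (discrete_topology UNIV) (f \<circ> (\<lambda>x. x k))"
    by (rule continuous_map_compose) simp
  then show "continuous_map (product_topology (\<lambda>_. discrete_topology UNIV) UNIV) (discrete_topology UNIV) (\<lambda>x. f (x k))"
    by (simp add: o_def)
qed

lemma letterwise_factor_map:
  assumes lang: "\<And>w. w \<in> subst_lang B L z \<Longrightarrow> map f w \<in> subst_lang B' L z'"
    and lift: "\<And>y. y \<in> subshift B' L z' \<Longrightarrow> \<exists>x\<in>subshift B L z. (\<lambda>n. f (x n)) = y"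
  shows "\<exists>\<pi>. continuous_map (subtopology shift_topology (subshift B L z))
              (subtopology shift_topology (subshift B' L z')) \<pi>
           \<and> \<pi> ` subshift B L z = subshift B' L z'
           \<and> (\<forall>x\<in>subshift B L z. \<pi> (shift x) = shift (\<pi> x))"
proof (intro exI conjI)
  let ?\<pi> = "\<lambda>x n. f (x n)"
  have into: "?\<pi> ` subshift B L z \<subseteq> subshift B' L z'"
    unfolding subshift_def using lang[of "map _ [0..<_]"] by (auto simp: o_def)
  then show "continuous_map (subtopology shift_topology (subshift B L z))
              (subtopology shift_topology (subshift B' L z')) ?\<pi>"
    using continuous_map_from_subtopology[OF continuous_map_letterwise]
    by (auto simp: continuous_map_in_subtopology)
  show "?\<pi> ` subshift B L z = subshift B' L z'"
    using into lift by blast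
  show "\<forall>x\<in>subshift B L z. ?\<pi> (shift x) = shift (?\<pi> x)"
    by (simp add: shift_def)
qed

locale theta_setting =
  fixes th :: "'a::finite \<Rightarrow> nat \<Rightarrow> 'a" and L k0 j0 :: nat
    and e0 :: "nat \<Rightarrow> 'a" and M0 :: "'a set"
  assumes L_pos: "0 < L"
    and primitive: "primitive_subst UNIV L th"
    and M0_minset: "M0 \<in> minsets L th"
    and e0_bij: "bij_betw e0 {..<col_min L th} M0"
    and minsets_to_M0: "\<forall>M\<in>minsets L th. tsubst L th k0 M j0 = M0"
begin

abbreviation "c \<equiv> col_min L th"
abbreviation "e \<equiv> eM L th k0 j0 e0"
abbreviation "\<sigma> \<equiv> sigmaM L th k0 j0 e0"
abbreviation "hatA \<equiv> hatAlph L th k0 j0 e0"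
abbreviation "hatT \<equiv> hatTheta L th k0 j0 e0"

lemma col_min_attained: "\<exists>k\<ge>1. \<exists>j<L ^ k. card (column L th k j) = c"
  unfolding col_min_def
proof (rule LeastI_ex)
  show "\<exists>n k. k \<ge> 1 \<and> (\<exists>j<L ^ k. card (column L th k j) = n)"
    using L_pos by (intro exI[of _ "card (column L th 1 0)"] exI[of _ 1]) auto
qed

lemma col_min_le: "k \<ge> 1 \<Longrightarrow> j < L ^ k \<Longrightarrow> c \<le> card (column L th k j)"
  unfolding col_min_def by (rule Least_le) auto

lemma col_min_pos: "0 < c"
proof -
  obtain k j where "card (column L th k j) = c"
    using col_min_attained by auto
  moreover have "column L th k j \<noteq> {}"
    by (auto simp: column_def)
  ultimately show ?thesis
    by (metis card_gt_0_iff finite)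
qed

lemma card_minset: "M \<in> minsets L th \<Longrightarrow> card M = c"
  by (simp add: minsets_def)

text \<open>Since c is the least column size, a letter map a \<mapsto> \<theta>(a)_j cannot shrink a minimal column.\<close>
lemma minset_step:
  assumes M: "M \<in> minsets L th" and j: "j < L"
  shows "tsubst L th 1 M j \<in> minsets L th" and "inj_on (\<lambda>a. th a j) M"
proof -
  obtain k j' where k: "k \<ge> 1" "j' < L ^ k" and M_col: "M = column L th k j'"
    using M unfolding minsets_def by auto
  have "j' * L + j < (j' + 1) * L"
    using j by simp
  also have "\<dots> \<le> L ^ k * L"
    using k(2) by (intro mult_right_mono) auto
  finally have bound: "j' * L + j < L ^ Suc k"
    by (simp add: mult.commute)
  have col: "tsubst L th 1 M j = column L th (Suc k) (j' * L + j)"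
    unfolding tsubst_one[OF j] M_col column_Suc[OF j] ..
  have "c \<le> card (tsubst L th 1 M j)"
    unfolding col using bound by (intro col_min_le) auto
  moreover have "card (tsubst L th 1 M j) \<le> c"
    using card_image_le[of M "\<lambda>a. th a j"] card_minset[OF M] unfolding tsubst_one[OF j] by simp
  ultimately have card_eq: "card (tsubst L th 1 M j) = c"
    by simp
  have "Suc k \<ge> 1 \<and> j' * L + j < L ^ Suc k \<and> tsubst L th 1 M j = column L th (Suc k) (j' * L + j)"
    using col bound by simp
  then show "tsubst L th 1 M j \<in> minsets L th"
    unfolding minsets_def using card_eq by blast
  show "inj_on (\<lambda>a. th a j) M"
    using card_eq card_minset[OF M] unfolding tsubst_one[OF j] by (intro eq_card_imp_inj_on) simp_all
qed

lemma inj_on_k0_j0: "M \<in> minsets L th \<Longrightarrow> inj_on (\<lambda>a. subst_pow L th k0 a j0) M"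
  using minsets_to_M0 card_minset[of M] card_minset[OF M0_minset]
  by (intro eq_card_imp_inj_on) (simp_all add: tsubst_def)

lemma eM_spec:
  assumes M: "M \<in> minsets L th" and i: "i < c"
  shows "e M i \<in> M" and "subst_pow L th k0 (e M i) j0 = e0 i"
proof -
  have "e0 i \<in> (\<lambda>a. subst_pow L th k0 a j0) ` M"
    using e0_bij i minsets_to_M0 M by (auto simp: bij_betw_def tsubst_def)
  then obtain a where "a \<in> M" "subst_pow L th k0 a j0 = e0 i"
    by (metis imageE)
  then have "e M i \<in> M \<and> subst_pow L th k0 (e M i) j0 = e0 i"
    unfolding eM_def using inj_on_k0_j0[OF M] by (rule_tac theI[of _ a]) (auto simp: inj_on_def)
  then show "e M i \<in> M" and "subst_pow L th k0 (e M i) j0 = e0 i"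
    by auto
qed

lemma bij_betw_eM:
  assumes M: "M \<in> minsets L th"
  shows "bij_betw (e M) {..<c} M"
proof (rule bij_betw_imageI)
  show "inj_on (e M) {..<c}"
  proof (rule inj_onI)
    fix x y assume "x \<in> {..<c}" "y \<in> {..<c}" "e M x = e M y"
    then have "e0 x = e0 y"
      using eM_spec(2)[OF M] by (metis lessThan_iff)
    then show "x = y"
      using e0_bij \<open>x \<in> {..<c}\<close> \<open>y \<in> {..<c}\<close> by (auto simp: bij_betw_def dest: inj_onD)
  qed
  show "e M ` {..<c} = M"
  proof (rule card_subset_eq)
    show "e M ` {..<c} \<subseteq> M"
      using eM_spec(1)[OF M] by auto
    show "card (e M ` {..<c}) = card M"
      using \<open>inj_on (e M) {..<c}\<close> card_minset[OF M] by (simp add: card_image)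
  qed simp
qed

lemma sigmaM_spec:
  assumes M: "M \<in> minsets L th" and j: "j < L" and m: "m < c"
  shows "\<sigma> M j m < c" and "th (e M (\<sigma> M j m)) j = e (tsubst L th 1 M j) m"
proof -
  let ?M' = "tsubst L th 1 M j"
  have "e ?M' m \<in> (\<lambda>a. th a j) ` M"
    using eM_spec(1)[OF minset_step(1)[OF M j] m] unfolding tsubst_one[OF j] .
  then obtain a where a: "e ?M' m = th a j" and "a \<in> M"
    by (rule imageE)
  have "a \<in> e M ` {..<c}"
    using bij_betw_imp_surj_on[OF bij_betw_eM[OF M]] \<open>a \<in> M\<close> by simp
  then obtain n where "a = e M n" and n: "n < c"
    by (rule imageE) simp
  with a have n: "n < c" "th (e M n) j = e ?M' m"
    by simp_all
  have unique: "n' = n" if "n' < c" "th (e M n') j = e ?M' m" for n'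
  proof -
    have "e M n' = e M n"
      by (rule inj_onD[OF minset_step(2)[OF M j]]) (use n that eM_spec(1)[OF M] in simp_all)
    then show "n' = n"
      by (rule inj_onD[OF bij_betw_imp_inj_on[OF bij_betw_eM[OF M]]]) (use n(1) that(1) in simp_all)
  qed
  have "(THE n'. n' < c \<and> th (e M n') j = e ?M' m) = n"
    using n unique by (intro the_equality) blast+
  then have "\<sigma> M j m = n"
    using m by (simp add: sigmaM_def)
  then show "\<sigma> M j m < c" and "th (e M (\<sigma> M j m)) j = e ?M' m"
    using n by simp_all
qed

lemma sigmaM_permutes:
  assumes M: "M \<in> minsets L th" and j: "j < L"
  shows "\<sigma> M j permutes {..<c}"
proof (rule inj_imp_permutes)
  show "inj_on (\<sigma> M j) {..<c}"
  proof (rule inj_onI)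
    fix x y assume "x \<in> {..<c}" "y \<in> {..<c}" "\<sigma> M j x = \<sigma> M j y"
    then have "e (tsubst L th 1 M j) x = e (tsubst L th 1 M j) y"
      using sigmaM_spec(2)[OF M j] by (metis lessThan_iff)
    then show "x = y"
      using bij_betw_eM[OF minset_step(1)[OF M j]] \<open>x \<in> {..<c}\<close> \<open>y \<in> {..<c}\<close>
      by (auto simp: bij_betw_def dest: inj_onD)
  qed
  show "\<sigma> M j x \<in> {..<c}" if "x \<in> {..<c}" for x
    using sigmaM_spec(1)[OF M j] that by simp
  show "\<sigma> M j x = x" if "x \<notin> {..<c}" for x
    using that by (simp add: sigmaM_def)
qed simp

lemma Ggroup_permutes: "s \<in> Ggroup L th k0 j0 e0 \<Longrightarrow> s permutes {..<c}"
  unfolding Ggroup_def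
proof (induction rule: gen_group.induct)
  case (gen_base s)
  then show ?case
    using sigmaM_permutes by auto
next
  case gen_id
  show ?case
    by (rule permutes_id)
next
  case (gen_comp f g)
  then show ?case
    using permutes_compose by blast
next
  case (gen_inv f)
  then show ?case
    using permutes_inv by blast
qed

lemma finite_hatAlph: "finite (hatA)"
proof -
  have "Ggroup L th k0 j0 e0 \<subseteq> {s. s permutes {..<c}}"
    using Ggroup_permutes by blast
  then have "finite (Ggroup L th k0 j0 e0)"
    using finite_permutations[of "{..<c}"] finite_subset by auto
  then show ?thesis
    by (simp add: hatAlph_def)
qed

definition proj_letter :: "(nat \<Rightarrow> nat) \<times> 'a set \<Rightarrow> 'a" where
  "proj_letter p = e (snd p) (inv (fst p) 0)"

lemma hatTheta_step:
  assumes p: "p \<in> hatA" and j: "j < L"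
  shows "hatT p j \<in> hatA"
    and "proj_letter (hatT p j) = th (proj_letter p) j"
proof -
  obtain s M where p_eq: "p = (s, M)" and s: "s \<in> Ggroup L th k0 j0 e0" and M: "M \<in> minsets L th"
    using p unfolding hatAlph_def by auto
  let ?t = "\<sigma> M j"
  have t: "?t \<in> Ggroup L th k0 j0 e0"
    unfolding Ggroup_def using M j by (intro gen_base) auto
  have "s \<circ> ?t \<in> Ggroup L th k0 j0 e0"
    using s t unfolding Ggroup_def by (rule gen_comp)
  then show "hatT p j \<in> hatA"
    unfolding hatTheta_def hatAlph_def p_eq using minset_step(1)[OF M j] by simp
  have s_perm: "s permutes {..<c}" and t_perm: "?t permutes {..<c}"
    using Ggroup_permutes s sigmaM_permutes[OF M j] by auto
  define n0 where "n0 = inv s 0"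
  define m where "m = inv ?t n0"
  have "n0 < c"
    using permutes_in_image[OF permutes_inv[OF s_perm], of 0] col_min_pos by (simp add: n0_def)
  then have "m < c" and "?t m = n0"
    using permutes_in_image[OF permutes_inv[OF t_perm], of n0] permutes_inverses(1)[OF t_perm]
    by (simp_all add: m_def)
  have "inv (s \<circ> ?t) 0 = m"
    using o_inv_distrib[OF permutes_bij[OF s_perm] permutes_bij[OF t_perm]] by (simp add: m_def n0_def)
  then have "proj_letter (hatT p j) = e (tsubst L th 1 M j) m"
    by (simp add: proj_letter_def hatTheta_def p_eq)
  also have "\<dots> = th (e M n0) j"
    using sigmaM_spec(2)[OF M j \<open>m < c\<close>] \<open>?t m = n0\<close> by simp
  finally show "proj_letter (hatT p j) = th (proj_letter p) j"
    by (simp add: proj_letter_def p_eq n0_def)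
qed

lemma subst_pow_hatTheta:
  assumes p: "p \<in> hatA" and i: "i < L ^ k"
  shows "subst_pow L hatT k p i \<in> hatA \<and> proj_letter (subst_pow L hatT k p i) = subst_pow L th k (proj_letter p) i"
  using i
proof (induction k arbitrary: i)
  case 0
  then show ?case
    using p by simp
next
  case (Suc k)
  have "i div L < L ^ k"
    using Suc.prems L_pos by (simp add: less_mult_imp_div_less mult.commute)
  then show ?case
    using Suc.IH hatTheta_step L_pos by simp
qed

lemma subst_lang_hatAlph_letters:
  assumes "v \<in> subst_lang hatA L hatT"
  shows "set v \<subseteq> hatA"
proof
  obtain p k i where p: "p \<in> hatA" and bound: "i + length v \<le> L ^ k"
    and v: "\<forall>t<length v. v ! t = subst_pow L hatT k p (i + t)"
    using assms unfolding subst_lang_def by auto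
  fix q assume "q \<in> set v"
  then obtain t where "t < length v" "q = v ! t"
    by (auto simp: in_set_conv_nth)
  then show "q \<in> hatA"
    using v bound subst_pow_hatTheta[OF p, of "i + t" k] by simp
qed

lemma map_proj_letter_subst_lang:
  assumes "v \<in> subst_lang hatA L hatT"
  shows "map proj_letter v \<in> subst_lang UNIV L th"
proof -
  obtain p k i where p: "p \<in> hatA" and bound: "i + length v \<le> L ^ k"
    and v: "\<forall>t<length v. v ! t = subst_pow L hatT k p (i + t)"
    using assms unfolding subst_lang_def by auto
  show ?thesis
    unfolding subst_lang_def
  proof (intro CollectI bexI exI conjI allI impI)
    show "i + length (map proj_letter v) \<le> L ^ k"
      using bound by simp
    fix t assume "t < length (map proj_letter v)"
    then show "map proj_letter v ! t = subst_pow L th k (proj_letter p) (i + t)"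
      using v bound subst_pow_hatTheta[OF p, of "i + t" k] by simp
  qed simp
qed

lemma id_M0_hatAlph: "(id, M0) \<in> hatA"
  unfolding hatAlph_def Ggroup_def using M0_minset by (auto intro: gen_id)

lemma lift_word:
  assumes "w \<in> subst_lang UNIV L th"
  obtains v where "v \<in> subst_lang hatA L hatT" and "map proj_letter v = w"
proof -
  obtain b k i where w_bound: "i + length w \<le> L ^ k"
    and w: "\<forall>t<length w. w ! t = subst_pow L th k b (i + t)"
    using assms unfolding subst_lang_def by auto
  obtain p where "\<forall>a b. \<exists>j<L ^ p. subst_pow L th p a j = b"
    using primitive unfolding primitive_subst_def by auto
  then obtain j where j: "j < L ^ p" "subst_pow L th p (proj_letter (id, M0)) j = b"
    by blast
  define i' where "i' = j * L ^ k + i"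
  have "i' + length w \<le> (j + 1) * L ^ k"
    using w_bound by (simp add: i'_def)
  also have "\<dots> \<le> L ^ p * L ^ k"
    using j(1) by (intro mult_right_mono) auto
  finally have bound: "i' + length w \<le> L ^ (k + p)"
    by (simp add: power_add mult.commute)
  define v where "v = map (\<lambda>t. subst_pow L hatT (k + p) (id, M0) (i' + t)) [0..<length w]"
  show ?thesis
  proof
    show "v \<in> subst_lang hatA L hatT"
      unfolding subst_lang_def v_def using id_M0_hatAlph bound by auto
    have "proj_letter (subst_pow L hatT (k + p) (id, M0) (i' + t)) = w ! t" if "t < length w" for t
    proof -
      have "proj_letter (subst_pow L hatT (k + p) (id, M0) (i' + t))
          = subst_pow L th (k + p) (proj_letter (id, M0)) (j * L ^ k + (i + t))"
        using subst_pow_hatTheta[OF id_M0_hatAlph, of "i' + t"] bound that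
        by (simp add: i'_def add.assoc)
      also have "\<dots> = subst_pow L th k b (i + t)"
        using subst_pow_add[OF L_pos, of "i + t" k th p _ j] j(2) w_bound that by simp
      finally show ?thesis
        using w that by simp
    qed
    then show "map proj_letter v = w"
      by (intro nth_equalityI) (simp_all add: v_def)
  qed
qed

definition lifts_window :: "(int \<Rightarrow> 'a) \<Rightarrow> nat \<Rightarrow> (int \<Rightarrow> (nat \<Rightarrow> nat) \<times> 'a set) \<Rightarrow> bool" where
  "lifts_window y N g \<longleftrightarrow> central_window g N \<in> subst_lang hatA L hatT
     \<and> central_window (\<lambda>i. proj_letter (g i)) N = central_window y N"

lemma finite_window_property_lifts_window:
  assumes y: "y \<in> subshift UNIV L th"
  shows "finite_window_property hatA (lifts_window y)"
proof
  show "finite hatA"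
    by (rule finite_hatAlph)
  show "lifts_window y N h" if "lifts_window y N g" and "\<And>i. \<bar>i\<bar> \<le> int N \<Longrightarrow> h i = g i" for N g h
  proof -
    have "central_window h N = central_window g N"
      "central_window (\<lambda>i. proj_letter (h i)) N = central_window (\<lambda>i. proj_letter (g i)) N"
      using that(2) by (simp_all add: central_window_eq_iff)
    then show ?thesis
      using that(1) by (simp add: lifts_window_def)
  qed
  show "lifts_window y N g" if "lifts_window y M g" and "N \<le> M" for M N g
    using that central_window_subword[of g M] unfolding lifts_window_def central_window_eq_iff
    by (meson order.trans of_nat_le_iff)
  show "\<exists>g. lifts_window y N g" for N
  proof -
    have "central_window y N \<in> subst_lang UNIV L th"
      using y by (simp add: subshift_iff_central_windows)
    then obtain v where v: "v \<in> subst_lang hatA L hatT" and v_proj: "map proj_letter v = central_window y N"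
      by (rule lift_word)
    define g where "g i = v ! nat (i + int N)" for i
    have "length v = 2 * N + 1"
      using arg_cong[OF v_proj, of length] by simp
    then have g_window: "central_window g N = v"
      unfolding g_def by (rule central_window_of_list)
    then have "central_window (\<lambda>i. proj_letter (g i)) N = central_window y N"
      using map_central_window[of proj_letter g N] v_proj by simp
    then show ?thesis
      using v g_window by (auto simp: lifts_window_def)
  qed
  show "g i \<in> hatA" if "lifts_window y N g" and "\<bar>i\<bar> \<le> int N" for N g i
  proof -
    have "nat (i + int N) < length (central_window g N)"
      using that(2) by simp
    then have "central_window g N ! nat (i + int N) \<in> set (central_window g N)"
      by (rule nth_mem)
    then have "g i \<in> set (central_window g N)"
      by (simp add: central_window_nth[OF that(2)])
    then show ?thesis
      using that(1) subst_lang_hatAlph_letters by (auto simp: lifts_window_def)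
  qed
qed

lemma subshift_lift:
  assumes y: "y \<in> subshift UNIV L th"
  shows "\<exists>x\<in>subshift hatA L hatT. (\<lambda>n. proj_letter (x n)) = y"
proof -
  interpret finite_window_property hatA "lifts_window y"
    using y by (rule finite_window_property_lifts_window)
  from ex_sequence_satisfying_all obtain x where x: "\<And>N. lifts_window y N x"
    by blast
  then have "x \<in> subshift hatA L hatT"
    by (simp add: subshift_iff_central_windows lifts_window_def)
  moreover have "(\<lambda>n. proj_letter (x n)) = y"
  proof
    fix n :: int
    show "proj_letter (x n) = y n"
      using x[of "nat \<bar>n\<bar>"] by (simp add: lifts_window_def central_window_eq_iff)
  qed
  ultimately show ?thesis
    by blast
qed

theorem hat_subshift_factor:
  "\<exists>\<pi>. continuous_map (subtopology shift_topology (subshift hatA L hatT))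
          (subtopology shift_topology (subshift UNIV L th)) \<pi>
       \<and> \<pi> ` subshift hatA L hatT = subshift UNIV L th
       \<and> (\<forall>x\<in>subshift hatA L hatT. \<pi> (shift x) = shift (\<pi> x))"
  using map_proj_letter_subst_lang subshift_lift by (rule letterwise_factor_map)

end

theorem mainTheorem17:
  fixes th :: "'a::finite \<Rightarrow> nat \<Rightarrow> 'a" and L :: nat
    and a0 :: 'a and M0 :: "'a set" and e0 :: "nat \<Rightarrow> 'a" and k0 j0 :: nat
  assumes "L \<ge> 2"
    and "primitive_subst UNIV L th"
    and "\<And>a b. (\<forall>j<L. th a j = th b j) \<Longrightarrow> a = b"
    and "infinite (subshift UNIV L th)"
    and "M0 \<in> minsets L th" and "a0 \<in> M0"
    and "th a0 0 = a0" and "tsubst L th 1 M0 0 = M0"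
    and "bij_betw e0 {..<col_min L th} M0" and "e0 0 = a0"
    and "k0 \<ge> 1" and "j0 < L ^ k0"
    and "\<forall>a\<in>M0. subst_pow L th k0 a j0 = a"
    and "\<forall>M\<in>minsets L th. tsubst L th k0 M j0 = M0"
  shows "\<exists>\<pi>. continuous_map
              (subtopology shift_topology (subshift (hatAlph L th k0 j0 e0) L (hatTheta L th k0 j0 e0)))
              (subtopology shift_topology (subshift UNIV L th)) \<pi>
           \<and> \<pi> ` subshift (hatAlph L th k0 j0 e0) L (hatTheta L th k0 j0 e0) = subshift UNIV L th
           \<and> (\<forall>x\<in>subshift (hatAlph L th k0 j0 e0) L (hatTheta L th k0 j0 e0).
                 \<pi> (shift x) = shift (\<pi> x))"
proof -
  interpret theta_setting th L k0 j0 e0 M0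
    by unfold_locales (use assms in auto)
  show ?thesis
    by (rule hat_subshift_factor)
qed

end
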